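(* Let $m,n\geq 5$ be integers and let $T_{m,n}=C_m\square C_n$ be the torus grid graph (Cartesian product of the cycles on $m$ and $n$ vertices). Then $\pi_{\mathrm{opt}}(T_{m,n})\geq \frac{2}{13}nm$.
   Context: A pebble distribution on a graph $G$ is a function $P:V(G)\to\mathbb{Z}_{\geq 0}$; its size is $|P|=\sum_v P(v)$. A pebbling move from a vertex $u$ with at least two pebbles to an adjacent vertex $v$ removes two pebbles from $u$ and adds one pebble to $v$. A vertex is reachable under $P$ if some sequence of pebbling moves (each executable, i.e. never making a pebble count negative) yields a distribution with at least one pebble on it. $P$ is solvable if every vertex is reachable. The optimal pebbling number $\pi_{\mathrm{opt}}(G)$ is the minimum size of a solvable distribution on $G$. The Cartesian product $G\square H$ has vertex set $V(G)\times V(H)$, with $(g_1,h_1)\sim(g_2,h_2)$ iff ($g_1g_2\in E(G)$ and $h_1=h_2$) or ($h_1h_2\in E(H)$ and $g_1=g_2$). *)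

theory Defs
  imports Complex_Main
begin

definition pebbling_move :: "('a \<Rightarrow> 'a \<Rightarrow> bool) \<Rightarrow> ('a \<Rightarrow> nat) \<Rightarrow> ('a \<Rightarrow> nat) \<Rightarrow> bool" where
  "pebbling_move E P Q \<longleftrightarrow>
     (\<exists>u v. E u v \<and> 2 \<le> P u \<and>
        Q = (let P' = P(u := P u - 2) in P'(v := P' v + 1)))"

definition reachable :: "('a \<Rightarrow> 'a \<Rightarrow> bool) \<Rightarrow> ('a \<Rightarrow> nat) \<Rightarrow> 'a \<Rightarrow> bool" where
  "reachable E P v \<longleftrightarrow> (\<exists>Q. (pebbling_move E)\<^sup>*\<^sup>* P Q \<and> 1 \<le> Q v)"

definition is_distribution :: "'a set \<Rightarrow> ('a \<Rightarrow> nat) \<Rightarrow> bool" where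
  "is_distribution V P \<longleftrightarrow> (\<forall>x. x \<notin> V \<longrightarrow> P x = 0)"

definition solvable :: "'a set \<Rightarrow> ('a \<Rightarrow> 'a \<Rightarrow> bool) \<Rightarrow> ('a \<Rightarrow> nat) \<Rightarrow> bool" where
  "solvable V E P \<longleftrightarrow> (\<forall>v\<in>V. reachable E P v)"

definition pi_opt :: "'a set \<Rightarrow> ('a \<Rightarrow> 'a \<Rightarrow> bool) \<Rightarrow> nat" where
  "pi_opt V E = Inf {sum P V | P. is_distribution V P \<and> solvable V E P}"

definition cycle_adj :: "nat \<Rightarrow> nat \<Rightarrow> nat \<Rightarrow> bool" where
  "cycle_adj m i j \<longleftrightarrow> i < m \<and> j < m \<and> i \<noteq> j \<and> (j = Suc i mod m \<or> i = Suc j mod m)"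

definition cart_adj :: "('a \<Rightarrow> 'a \<Rightarrow> bool) \<Rightarrow> ('b \<Rightarrow> 'b \<Rightarrow> bool) \<Rightarrow> 'a \<times> 'b \<Rightarrow> 'a \<times> 'b \<Rightarrow> bool" where
  "cart_adj G H x y \<longleftrightarrow>
     (G (fst x) (fst y) \<and> snd x = snd y) \<or> (H (snd x) (snd y) \<and> fst x = fst y)"

definition torus_vertices :: "nat \<Rightarrow> nat \<Rightarrow> (nat \<times> nat) set" where
  "torus_vertices m n = {0..<m} \<times> {0..<n}"

definition torus_adj :: "nat \<Rightarrow> nat \<Rightarrow> nat \<times> nat \<Rightarrow> nat \<times> nat \<Rightarrow> bool" where
  "torus_adj m n = cart_adj (cycle_adj m) (cycle_adj n)"

end

theory Submission
  imports Defs
begin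

text \<open>Let T be the set of vertices that can be made to hold two pebbles. Every vertex lies in T,
  is adjacent to T, or carries a pebble outside T. A pebble on a \<in> T contributes the weight
  2^-d(a,x) at x, where d is the distance along walks inside T: a pebbling move never increases
  the total weight at x, and every x \<in> T must eventually receive weight 2. Hence T and its
  neighbourhood together have at most 13/2 vertices per pebble on T, because on a graph of
  degree four in which every ball satisfies sum 2^-d \<le> 9 (on the torus 9 = 3 * 3) the weights
  around a form a breadth-first tree in which every vertex but a has at most three children.\<close>

section \<open>Distance and decaying weights inside a vertex set\<close>

fun walk_within :: "('a \<Rightarrow> 'a \<Rightarrow> bool) \<Rightarrow> 'a set \<Rightarrow> nat \<Rightarrow> 'a \<Rightarrow> 'a \<Rightarrow> bool" where
  "walk_within E T 0 a b \<longleftrightarrow> a = b \<and> a \<in> T"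
| "walk_within E T (Suc k) a b \<longleftrightarrow> a \<in> T \<and> (\<exists>c. E a c \<and> walk_within E T k c b)"

definition dist_within :: "('a \<Rightarrow> 'a \<Rightarrow> bool) \<Rightarrow> 'a set \<Rightarrow> 'a \<Rightarrow> 'a \<Rightarrow> nat" where
  "dist_within E T a b = (LEAST k. walk_within E T k a b)"

definition decay_weight :: "('a \<Rightarrow> 'a \<Rightarrow> bool) \<Rightarrow> 'a set \<Rightarrow> 'a \<Rightarrow> 'a \<Rightarrow> real" where
  "decay_weight E T a b =
     (if \<exists>k. walk_within E T k a b then (1/2) ^ dist_within E T a b else 0)"

lemma walk_within_endpoints: "walk_within E T k a b \<Longrightarrow> a \<in> T \<and> b \<in> T"
  by (induction k arbitrary: a) auto

lemma walk_within_snoc: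
  "walk_within E T k a y \<Longrightarrow> E y x \<Longrightarrow> x \<in> T \<Longrightarrow> walk_within E T (Suc k) a x"
  by (induction k arbitrary: a) auto

lemma walk_within_SucE:
  assumes "walk_within E T (Suc k) a x"
  obtains y where "walk_within E T k a y" "E y x" "x \<in> T"
  using assms
proof (induction k arbitrary: a)
  case 0
  then show ?case by auto
next
  case (Suc k)
  from Suc.prems(2) obtain c where "a \<in> T" "E a c" "walk_within E T (Suc k) c x"
    by auto
  with Suc.IH[of c] Suc.prems(1) show ?case
    by auto
qed

lemma walk_within_dist_within:
  "walk_within E T k a b \<Longrightarrow> walk_within E T (dist_within E T a b) a b"
  unfolding dist_within_def by (rule LeastI)

lemma dist_within_le: "walk_within E T k a b \<Longrightarrow> dist_within E T a b \<le> k"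
  unfolding dist_within_def by (rule Least_le)

lemma decay_weight_eq:
  "walk_within E T k a b \<Longrightarrow> decay_weight E T a b = (1/2) ^ dist_within E T a b"
  unfolding decay_weight_def by auto

lemma decay_weight_nonneg: "0 \<le> decay_weight E T a b"
  unfolding decay_weight_def by auto

lemma decay_weight_self: "a \<in> T \<Longrightarrow> decay_weight E T a a = 1"
  using decay_weight_eq[of E T 0 a a] dist_within_le[of E T 0 a a] by simp

lemma decay_weight_neighbour_le:
  assumes "s \<in> T" and "E s t"
  shows "decay_weight E T t w \<le> 2 * decay_weight E T s w"
proof (cases "\<exists>k. walk_within E T k t w")
  case False
  then show ?thesis
    using decay_weight_nonneg[of E T s w] by (simp add: decay_weight_def)
next
  case True
  then obtain k where k: "walk_within E T k t w" by blast
  define j where "j = dist_within E T t w"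
  have sw: "walk_within E T (Suc j) s w"
    using walk_within_dist_within[OF k] assms unfolding j_def by auto
  have "(1/2::real) ^ Suc j \<le> (1/2) ^ dist_within E T s w"
    using dist_within_le[OF sw] by (rule power_decreasing) simp_all
  then show ?thesis
    using decay_weight_eq[OF k] decay_weight_eq[OF sw] unfolding j_def by simp
qed

lemma decay_weight_parent:
  assumes "x \<noteq> u" and "0 < decay_weight E T u x"
  obtains y where "E y x" "y \<in> T" "decay_weight E T u y = 2 * decay_weight E T u x"
proof -
  obtain k where "walk_within E T k u x"
    using assms(2) unfolding decay_weight_def by (auto split: if_splits)
  then have walk: "walk_within E T (dist_within E T u x) u x"
    by (rule walk_within_dist_within)
  with assms(1) obtain j where j: "dist_within E T u x = Suc j"
    by (cases "dist_within E T u x") auto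
  with walk have "walk_within E T (Suc j) u x"
    by simp
  then obtain y where y: "walk_within E T j u y" "E y x" "x \<in> T"
    by (rule walk_within_SucE)
  have "dist_within E T u y = j"
  proof (rule antisym)
    show "dist_within E T u y \<le> j"
      using y(1) by (rule dist_within_le)
    have "walk_within E T (Suc (dist_within E T u y)) u x"
      using walk_within_snoc[OF walk_within_dist_within[OF y(1)] y(2,3)] .
    then show "j \<le> dist_within E T u y"
      using dist_within_le j by fastforce
  qed
  then have "decay_weight E T u y = 2 * decay_weight E T u x"
    using decay_weight_eq[OF y(1)] decay_weight_eq[OF walk] j by simp
  then show thesis
    using that y(2) walk_within_endpoints[OF y(1)] by blast
qed

lemma walk_within_lipschitz_le:
  assumes "d u = (0::nat)" and "\<And>y x. E y x \<Longrightarrow> d x \<le> d y + 1"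
  shows "walk_within E T k u x \<Longrightarrow> d x \<le> k"
proof (induction k arbitrary: x)
  case 0
  then show ?case using assms(1) by simp
next
  case (Suc k)
  from Suc.prems obtain y where "walk_within E T k u y" "E y x"
    by (rule walk_within_SucE)
  with Suc.IH assms(2) show ?case by fastforce
qed

lemma decay_weight_le_pow:
  assumes "d u = (0::nat)" and "\<And>y x. E y x \<Longrightarrow> d x \<le> d y + 1"
  shows "decay_weight E T u x \<le> (1/2) ^ d x"
proof (cases "\<exists>k. walk_within E T k u x")
  case False
  then show ?thesis unfolding decay_weight_def by simp
next
  case True
  then obtain k where k: "walk_within E T k u x" by blast
  have "d x \<le> dist_within E T u x"
    using walk_within_lipschitz_le[of d u E, OF assms walk_within_dist_within[OF k]] .
  then show ?thesis
    using decay_weight_eq[OF k] by (simp add: power_decreasing)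
qed

section \<open>The pebbling potential\<close>

definition two_pebble_set :: "('a \<Rightarrow> 'a \<Rightarrow> bool) \<Rightarrow> ('a \<Rightarrow> nat) \<Rightarrow> 'a set" where
  "two_pebble_set E P = {w. \<exists>Q. (pebbling_move E)\<^sup>*\<^sup>* P Q \<and> 2 \<le> Q w}"

definition pebble_potential :: "('a \<Rightarrow> 'a \<Rightarrow> bool) \<Rightarrow> 'a set \<Rightarrow> ('a \<Rightarrow> nat) \<Rightarrow> 'a \<Rightarrow> real" where
  "pebble_potential E T Q x = (\<Sum>a\<in>T. real (Q a) * decay_weight E T a x)"

lemma pebbling_moveE:
  assumes "pebbling_move E Q Q'"
  obtains s t where "E s t" "2 \<le> Q s"
    "Q' = (let P' = Q(s := Q s - 2) in P'(t := P' t + 1))"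
  using assms unfolding pebbling_move_def by blast

lemma pebbling_moves_preserve_distribution:
  assumes "(pebbling_move E)\<^sup>*\<^sup>* P Q" and "is_distribution V P"
    and closed: "\<And>a b. E a b \<Longrightarrow> a \<in> V \<Longrightarrow> b \<in> V"
  shows "is_distribution V Q"
  using assms(1,2)
proof (induction rule: rtranclp_induct)
  case base
  then show ?case .
next
  case (step Q1 Q2)
  from step.hyps(2) obtain s t where st: "E s t" "2 \<le> Q1 s"
    "Q2 = (let P' = Q1(s := Q1 s - 2) in P'(t := P' t + 1))"
    by (rule pebbling_moveE)
  have Q1: "is_distribution V Q1"
    using step.IH step.prems by blast
  with st(2) have "s \<in> V"
    unfolding is_distribution_def by fastforce
  with closed st(1) have "t \<in> V"
    by blast
  with Q1 \<open>s \<in> V\<close> st(3) show ?case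
    unfolding is_distribution_def by (auto simp: Let_def)
qed

lemma two_pebble_set_subset:
  assumes "is_distribution V P" and "\<And>a b. E a b \<Longrightarrow> a \<in> V \<Longrightarrow> b \<in> V"
  shows "two_pebble_set E P \<subseteq> V"
  using pebbling_moves_preserve_distribution[OF _ assms]
  unfolding two_pebble_set_def is_distribution_def by fastforce

lemma reachable_imp_pebble_or_two_pebble_neighbour:
  assumes "(pebbling_move E)\<^sup>*\<^sup>* P Q" and "1 \<le> Q v"
  shows "1 \<le> P v \<or> (\<exists>w\<in>two_pebble_set E P. E w v)"
  using assms
proof (induction arbitrary: v rule: rtranclp_induct)
  case base
  then show ?case by simp
next
  case (step Q1 Q2)
  show ?case
  proof (cases "1 \<le> Q1 v")
    case True
    then show ?thesis using step.IH by blast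
  next
    case False
    from step.hyps(2) obtain s t where st: "E s t" "2 \<le> Q1 s"
      "Q2 = (let P' = Q1(s := Q1 s - 2) in P'(t := P' t + 1))"
      by (rule pebbling_moveE)
    with False step.prems have "v = t"
      by (auto simp: Let_def split: if_splits)
    moreover have "s \<in> two_pebble_set E P"
      using step.hyps(1) st(2) unfolding two_pebble_set_def by blast
    ultimately show ?thesis
      using st(1) by blast
  qed
qed

lemma pebble_potential_move_le:
  assumes "finite T" and "pebbling_move E Q Q'" and "\<And>s. 2 \<le> Q s \<Longrightarrow> s \<in> T"
  shows "pebble_potential E T Q' x \<le> pebble_potential E T Q x"
proof -
  let ?K = "\<lambda>a. decay_weight E T a x"
  from assms(2) obtain s t where st: "E s t" "2 \<le> Q s"
    "Q' = (let P' = Q(s := Q s - 2) in P'(t := P' t + 1))"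
    by (rule pebbling_moveE)
  have sT: "s \<in> T"
    using assms(3) st(2) .
  have pointwise: "real (Q' a) * ?K a
      = real (Q a) * ?K a - (if a = s then 2 * ?K a else 0) + (if a = t then ?K a else 0)" for a
    using st(2,3) by (auto simp: Let_def of_nat_diff algebra_simps)
  have "pebble_potential E T Q' x
      = pebble_potential E T Q x - 2 * ?K s + (if t \<in> T then ?K t else 0)"
    unfolding pebble_potential_def pointwise
    using assms(1) sT by (simp add: sum.distrib sum_subtractf sum.delta)
  also have "\<dots> \<le> pebble_potential E T Q x"
    using decay_weight_neighbour_le[of s T E, OF sT st(1)] decay_weight_nonneg[of E T s x] by auto
  finally show ?thesis .
qed

lemma pebble_potential_reachable_le:
  assumes "finite (two_pebble_set E P)" and "(pebbling_move E)\<^sup>*\<^sup>* P Q"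
  shows "pebble_potential E (two_pebble_set E P) Q x
    \<le> pebble_potential E (two_pebble_set E P) P x"
  using assms(2)
proof (induction rule: rtranclp_induct)
  case base
  then show ?case by simp
next
  case (step Q1 Q2)
  have "pebble_potential E (two_pebble_set E P) Q2 x
      \<le> pebble_potential E (two_pebble_set E P) Q1 x"
    by (rule pebble_potential_move_le[OF assms(1) step.hyps(2)])
      (use step.hyps(1) in \<open>auto simp: two_pebble_set_def\<close>)
  with step.IH show ?case by linarith
qed

lemma two_le_pebble_potential:
  assumes fin: "finite (two_pebble_set E P)" and x: "x \<in> two_pebble_set E P"
  shows "2 \<le> pebble_potential E (two_pebble_set E P) P x"
proof -
  let ?T = "two_pebble_set E P"
  from x obtain Q where Q: "(pebbling_move E)\<^sup>*\<^sup>* P Q" "2 \<le> Q x"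
    unfolding two_pebble_set_def by blast
  have "2 \<le> real (Q x) * decay_weight E ?T x x"
    using Q(2) decay_weight_self[OF x] by simp
  also have "\<dots> \<le> pebble_potential E ?T Q x"
    unfolding pebble_potential_def
    by (rule member_le_sum[OF x]) (auto simp: decay_weight_nonneg fin)
  also have "\<dots> \<le> pebble_potential E ?T P x"
    by (rule pebble_potential_reachable_le[OF fin Q(1)])
  finally show ?thesis .
qed

lemma sum_pebble_potential_eq:
  "(\<Sum>x\<in>X. pebble_potential E T Q (f x))
    = (\<Sum>a\<in>T. real (Q a) * (\<Sum>x\<in>X. decay_weight E T a (f x)))"
  unfolding pebble_potential_def sum_distrib_left by (rule sum.swap)

section \<open>Bounding the total weight around a vertex\<close>

lemma decay_weight_sum_le_pow_sum:
  assumes finV: "finite V" and TV: "T \<subseteq> V" and SV: "S \<subseteq> V" and disj: "T \<inter> S = {}"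
    and wS: "\<And>x. x \<in> S \<Longrightarrow> E (w x) x"
    and d0: "d u = (0::nat)" and dlip: "\<And>y x. E y x \<Longrightarrow> d x \<le> d y + 1"
  shows "(\<Sum>x\<in>T. decay_weight E T u x) + (\<Sum>x\<in>S. decay_weight E T u (w x)) / 2
    \<le> (\<Sum>x\<in>V. (1/2) ^ d x)"
proof -
  let ?K = "decay_weight E T u"
  have finT: "finite T" and finS: "finite S"
    using finite_subset TV SV finV by blast+
  have "(\<Sum>x\<in>T. ?K x) \<le> (\<Sum>x\<in>T. (1/2) ^ d x)"
    by (intro sum_mono decay_weight_le_pow[of d, OF d0 dlip])
  moreover have "(\<Sum>x\<in>S. ?K (w x)) / 2 \<le> (\<Sum>x\<in>S. (1/2) ^ d x)"
    unfolding sum_divide_distrib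
  proof (rule sum_mono)
    fix x assume "x \<in> S"
    then have "d x \<le> d (w x) + 1"
      using dlip wS by blast
    then have "(1/2::real) ^ (d (w x) + 1) \<le> (1/2) ^ d x"
      by (rule power_decreasing) simp_all
    then show "?K (w x) / 2 \<le> (1/2) ^ d x"
      using decay_weight_le_pow[of d u E T "w x", OF d0 dlip] by simp
  qed
  moreover have "(\<Sum>x\<in>T. (1/2::real) ^ d x) + (\<Sum>x\<in>S. (1/2) ^ d x) \<le> (\<Sum>x\<in>V. (1/2) ^ d x)"
    using finT finS disj TV SV
    by (simp add: sum.union_disjoint[symmetric] sum_mono2[OF finV])
  ultimately show ?thesis
    by linarith
qed

lemma sum_comp_eq_sum_card_fibres:
  assumes "finite X" and "finite T" and "p ` X \<subseteq> T"
  shows "(\<Sum>x\<in>X. f (p x)) = (\<Sum>y\<in>T. of_nat (card {x \<in> X. p x = y}) * f y)"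
proof -
  have "(\<Sum>x\<in>X. f (p x)) = (\<Sum>y\<in>T. \<Sum>x\<in>{x \<in> X. p x = y}. f (p x))"
    by (rule sum.group[symmetric]) (use assms in auto)
  also have "\<dots> = (\<Sum>y\<in>T. of_nat (card {x \<in> X. p x = y}) * f y)"
    by (intro sum.cong) auto
  finally show ?thesis .
qed

text \<open>The parent p y is a neighbour of y but not one of its children: its weight is larger.\<close>
lemma card_children_add_parent_le:
  fixes K \<kappa> :: "'a \<Rightarrow> real"
  assumes yX: "y \<in> X" and yT: "y \<in> T" and Ky: "0 < K y"
    and parent: "\<And>x. x \<in> X \<Longrightarrow> p x \<in> T \<and> E (p x) x \<and> K (p x) = 2 * \<kappa> x"
    and own: "\<And>x. x \<in> X \<Longrightarrow> x \<in> T \<Longrightarrow> \<kappa> x = K x"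
    and sym: "\<And>a b. E a b \<Longrightarrow> E b a"
    and fin: "finite {x. E y x}" and deg: "card {x. E y x} \<le> D"
  shows "card {x \<in> X. p x = y} + 1 \<le> D"
proof -
  let ?C = "{x \<in> X. p x = y}"
  have py: "p y \<in> T" "E (p y) y" "K (p y) = 2 * K y"
    using parent[OF yX] own[OF yX yT] by auto
  have "p y \<notin> ?C"
  proof
    assume "p y \<in> ?C"
    then have "K y = 2 * K (p y)"
      using parent own py(1) by fastforce
    with py(3) Ky show False
      by simp
  qed
  moreover have sub: "insert (p y) ?C \<subseteq> {x. E y x}"
    using parent sym[OF py(2)] by auto
  moreover have "finite ?C"
    using finite_subset[OF _ fin] sub by blast
  ultimately show ?thesis
    using card_mono[OF fin sub] deg by simp
qed

lemma sum_le_by_halving_parents: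
  fixes K \<kappa> :: "'a \<Rightarrow> real" and D :: nat
  assumes finX: "finite X" and finT: "finite T" and uT: "u \<in> T"
    and K0: "\<And>y. 0 \<le> K y"
    and parent: "\<And>x. x \<in> X \<Longrightarrow> p x \<in> T \<and> E (p x) x \<and> K (p x) = 2 * \<kappa> x"
    and own: "\<And>x. x \<in> X \<Longrightarrow> x \<in> T \<Longrightarrow> \<kappa> x = K x"
    and nonroot: "\<And>y. y \<in> T \<Longrightarrow> y \<noteq> u \<Longrightarrow> 0 < K y \<Longrightarrow> y \<in> X"
    and sym: "\<And>a b. E a b \<Longrightarrow> E b a"
    and deg: "\<And>y. y \<in> T \<Longrightarrow> finite {x. E y x} \<and> card {x. E y x} \<le> D"
  shows "(\<Sum>x\<in>X. \<kappa> x) \<le> D / 2 * K u + (real D - 1) / 2 * (\<Sum>y\<in>T-{u}. K y)"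
proof -
  let ?C = "\<lambda>y. {x \<in> X. p x = y}"
  have children: "card (?C y) * K y \<le> (if y = u then real D else real D - 1) * K y"
    if yT: "y \<in> T" for y
  proof (cases "0 < K y")
    case False
    with K0[of y] show ?thesis by simp
  next
    case Kpos: True
    have fin: "finite {x. E y x}" and card: "card {x. E y x} \<le> D"
      using deg[OF yT] by auto
    show ?thesis
    proof (cases "y = u")
      case True
      have "?C y \<subseteq> {x. E y x}"
        using parent by auto
      with True Kpos card_mono[OF fin] card show ?thesis
        by (simp, meson order_trans of_nat_le_iff)
    next
      case False
      have "card (?C y) + 1 \<le> D"
        by (rule card_children_add_parent_le[OF nonroot[OF yT False Kpos] yT Kpos parent own sym
              fin card])
      with False Kpos show ?thesis
        by simp
    qed
  qed
  have "(\<Sum>x\<in>X. \<kappa> x) = (\<Sum>x\<in>X. K (p x) / 2)"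
    using parent by (intro sum.cong) auto
  also have "\<dots> = (\<Sum>y\<in>T. card (?C y) * (K y / 2))"
    by (rule sum_comp_eq_sum_card_fibres[OF finX finT]) (use parent in auto)
  also have "\<dots> \<le> (\<Sum>y\<in>T. (if y = u then real D else real D - 1) * K y / 2)"
    using children by (intro sum_mono) (simp add: divide_right_mono)
  also have "\<dots> = D * K u / 2 + (\<Sum>y\<in>T-{u}. (real D - 1) * K y / 2)"
    using finT uT by (simp add: sum.remove)
  also have "\<dots> = D / 2 * K u + (real D - 1) / 2 * (\<Sum>y\<in>T-{u}. K y)"
    by (simp add: sum_distrib_left sum_divide_distrib)
  finally show ?thesis .
qed

lemma decay_weight_children_sum_le:
  fixes D :: nat
  assumes finT: "finite T" and uT: "u \<in> T" and finS: "finite S" and disj: "T \<inter> S = {}"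
    and wS: "\<And>x. x \<in> S \<Longrightarrow> w x \<in> T \<and> E (w x) x"
    and sym: "\<And>a b. E a b \<Longrightarrow> E b a"
    and deg: "\<And>y. y \<in> T \<Longrightarrow> finite {x. E y x} \<and> card {x. E y x} \<le> D"
  shows "(\<Sum>x\<in>T-{u}. decay_weight E T u x) + (\<Sum>x\<in>S. decay_weight E T u (w x)) / 2
    \<le> D / 2 + (real D - 1) / 2 * (\<Sum>x\<in>T-{u}. decay_weight E T u x)"
proof -
  define K where "K = decay_weight E T u"
  define \<kappa> where "\<kappa> x = (if x \<in> T then K x else K (w x) / 2)" for x
  define X where "X = {x \<in> (T - {u}) \<union> S. 0 < \<kappa> x}"
  have K0: "0 \<le> K x" for x
    unfolding K_def by (rule decay_weight_nonneg)
  have "(\<Sum>x\<in>T-{u}. K x) + (\<Sum>x\<in>S. K (w x)) / 2 = (\<Sum>x\<in>(T - {u}) \<union> S. \<kappa> x)"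
    using finT finS disj unfolding \<kappa>_def sum_divide_distrib
    by (subst sum.union_disjoint) (auto intro!: arg_cong2[where f = "(+)"] sum.cong)
  also have "\<dots> = (\<Sum>x\<in>X. \<kappa> x)"
    unfolding X_def using finT finS K0
    by (intro sum.mono_neutral_right) (auto simp: \<kappa>_def less_le)
  finally have lhs: "(\<Sum>x\<in>T-{u}. K x) + (\<Sum>x\<in>S. K (w x)) / 2 = (\<Sum>x\<in>X. \<kappa> x)" .
  have "\<exists>y. y \<in> T \<and> E y x \<and> K y = 2 * \<kappa> x" if "x \<in> X" for x
  proof (cases "x \<in> T")
    case True
    with that disj have "x \<noteq> u" "0 < K x"
      unfolding X_def \<kappa>_def by auto
    then obtain y where "E y x" "y \<in> T" "K y = 2 * K x"
      using decay_weight_parent[of x u E T] unfolding K_def by blast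
    with True show ?thesis
      unfolding \<kappa>_def by auto
  next
    case False
    with that wS show ?thesis
      unfolding X_def \<kappa>_def by auto
  qed
  then obtain p where parent: "\<And>x. x \<in> X \<Longrightarrow> p x \<in> T \<and> E (p x) x \<and> K (p x) = 2 * \<kappa> x"
    by metis
  have "finite X"
    unfolding X_def using finT finS by simp
  then have "(\<Sum>x\<in>X. \<kappa> x) \<le> D / 2 * K u + (real D - 1) / 2 * (\<Sum>y\<in>T-{u}. K y)"
    by (rule sum_le_by_halving_parents[OF _ finT uT K0 parent _ _ sym deg])
      (auto simp: X_def \<kappa>_def)
  with lhs show ?thesis
    using decay_weight_self[OF uT] unfolding K_def by simp
qed

text \<open>With A the sum over T - {u} and B the sum over S, decay_weight_sum_le_pow_sum and
  decay_weight_children_sum_le give 1 + A + B / 2 \<le> 9 and B / 2 \<le> 2 + A / 2; hence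
  1 + A + B \<le> 13, with equality at A = 4 and B = 8.\<close>
lemma decay_weight_sum_le_13:
  assumes finV: "finite V" and TV: "T \<subseteq> V" and SV: "S \<subseteq> V" and disj: "T \<inter> S = {}"
    and wS: "\<And>x. x \<in> S \<Longrightarrow> w x \<in> T \<and> E (w x) x" and uT: "u \<in> T"
    and sym: "\<And>a b. E a b \<Longrightarrow> E b a"
    and deg: "\<And>y. y \<in> T \<Longrightarrow> finite {x. E y x} \<and> card {x. E y x} \<le> 4"
    and d0: "d u = (0::nat)" and dlip: "\<And>y x. E y x \<Longrightarrow> d x \<le> d y + 1"
    and dsum: "(\<Sum>x\<in>V. (1/2::real) ^ d x) \<le> 9"
  shows "(\<Sum>x\<in>T. decay_weight E T u x) + (\<Sum>x\<in>S. decay_weight E T u (w x)) \<le> 13"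
proof -
  let ?K = "decay_weight E T u"
  have finT: "finite T" and finS: "finite S"
    using finite_subset TV SV finV by blast+
  have "(\<Sum>x\<in>T. ?K x) = 1 + (\<Sum>x\<in>T-{u}. ?K x)"
    using finT uT decay_weight_self[OF uT] by (simp add: sum.remove)
  moreover have "(\<Sum>x\<in>T. ?K x) + (\<Sum>x\<in>S. ?K (w x)) / 2 \<le> 9"
    using decay_weight_sum_le_pow_sum[of V T S E w d u, OF finV TV SV disj _ d0 dlip] wS dsum
    by fastforce
  moreover have "(\<Sum>x\<in>T-{u}. ?K x) + (\<Sum>x\<in>S. ?K (w x)) / 2
      \<le> 2 + 3 / 2 * (\<Sum>x\<in>T-{u}. ?K x)"
    using decay_weight_children_sum_le[of T u S w E 4, OF finT uT finS disj wS sym deg] by simp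
  ultimately show ?thesis
    by linarith
qed

section \<open>Solvable distributions on graphs of degree four\<close>

lemma card_two_pebble_set_and_boundary_le:
  assumes finV: "finite V" and closed: "\<And>a b. E a b \<Longrightarrow> a \<in> V \<Longrightarrow> b \<in> V"
    and sym: "\<And>a b. E a b \<Longrightarrow> E b a"
    and deg: "\<And>y. y \<in> V \<Longrightarrow> finite {x. E y x} \<and> card {x. E y x} \<le> 4"
    and d0: "\<And>u. d u u = (0::nat)"
    and dlip: "\<And>u x y. u \<in> V \<Longrightarrow> E y x \<Longrightarrow> d u x \<le> d u y + 1"
    and dsum: "\<And>u. u \<in> V \<Longrightarrow> (\<Sum>x\<in>V. (1/2::real) ^ d u x) \<le> 9"
    and P: "is_distribution V P"
  defines "T \<equiv> two_pebble_set E P"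
    and "S \<equiv> {x \<in> V. x \<notin> two_pebble_set E P \<and> (\<exists>w\<in>two_pebble_set E P. E w x)}"
  shows "real (card T) + real (card S) \<le> 13/2 * (\<Sum>a\<in>T. real (P a))"
proof -
  have TV: "T \<subseteq> V"
    unfolding T_def by (rule two_pebble_set_subset[OF P closed])
  have finT: "finite T"
    using finite_subset[OF TV finV] .
  have "\<forall>x\<in>S. \<exists>w. w \<in> T \<and> E w x"
    unfolding S_def T_def by blast
  then obtain w where wS: "\<And>x. x \<in> S \<Longrightarrow> w x \<in> T \<and> E (w x) x"
    using bchoice by meson
  let ?\<Phi> = "pebble_potential E T P"
  let ?K = "decay_weight E T"
  have \<Phi>2: "2 \<le> ?\<Phi> x" if "x \<in> T" for x
    using two_le_pebble_potential[of E P x] finT that unfolding T_def by blast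
  have weights: "(\<Sum>x\<in>T. ?K a x) + (\<Sum>x\<in>S. ?K a (w x)) \<le> 13" if aT: "a \<in> T" for a
  proof -
    have aV: "a \<in> V"
      using aT TV by blast
    have "S \<subseteq> V" and "T \<inter> S = {}"
      unfolding S_def T_def by blast+
    then show ?thesis
      using decay_weight_sum_le_13[of V T S w E a "d a", OF finV TV _ _ wS aT sym _
          d0[of a] dlip[OF aV] dsum[OF aV]] deg TV
      by blast
  qed
  have "real (card T) \<le> (\<Sum>x\<in>T. ?\<Phi> x) / 2"
    using sum_mono[of T "\<lambda>_. 1" "\<lambda>x. ?\<Phi> x / 2"] \<Phi>2 by (simp add: sum_divide_distrib)
  moreover have "real (card S) \<le> (\<Sum>x\<in>S. ?\<Phi> (w x)) / 2"
    using sum_mono[of S "\<lambda>_. 1" "\<lambda>x. ?\<Phi> (w x) / 2"] \<Phi>2 wS by (simp add: sum_divide_distrib)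
  moreover have "(\<Sum>x\<in>T. ?\<Phi> x) + (\<Sum>x\<in>S. ?\<Phi> (w x))
      = (\<Sum>a\<in>T. real (P a) * ((\<Sum>x\<in>T. ?K a x) + (\<Sum>x\<in>S. ?K a (w x))))"
    using sum_pebble_potential_eq[of E T P id T] sum_pebble_potential_eq[of E T P w S]
    by (simp add: distrib_left sum.distrib)
  moreover have "\<dots> \<le> (\<Sum>a\<in>T. real (P a) * 13)"
    using weights by (intro sum_mono mult_left_mono) simp_all
  moreover have "\<dots> = 13 * (\<Sum>a\<in>T. real (P a))"
    by (simp add: sum_distrib_left mult.commute)
  ultimately show ?thesis
    by linarith
qed

lemma card_le_solvable_sum:
  assumes finV: "finite V" and closed: "\<And>a b. E a b \<Longrightarrow> a \<in> V \<Longrightarrow> b \<in> V"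
    and sym: "\<And>a b. E a b \<Longrightarrow> E b a"
    and deg: "\<And>y. y \<in> V \<Longrightarrow> finite {x. E y x} \<and> card {x. E y x} \<le> 4"
    and d0: "\<And>u. d u u = (0::nat)"
    and dlip: "\<And>u x y. u \<in> V \<Longrightarrow> E y x \<Longrightarrow> d u x \<le> d u y + 1"
    and dsum: "\<And>u. u \<in> V \<Longrightarrow> (\<Sum>x\<in>V. (1/2::real) ^ d u x) \<le> 9"
    and P: "is_distribution V P" and solv: "solvable V E P"
  shows "real (card V) \<le> 13/2 * real (sum P V)"
proof -
  define T where "T = two_pebble_set E P"
  define S where "S = {x \<in> V. x \<notin> T \<and> (\<exists>w\<in>T. E w x)}"
  define U where "U = {x \<in> V - T. 1 \<le> P x}"
  have TV: "T \<subseteq> V"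
    unfolding T_def by (rule two_pebble_set_subset[OF P closed])
  have cover: "V \<subseteq> T \<union> S \<union> U"
  proof
    fix v assume v: "v \<in> V"
    then obtain Q where "(pebbling_move E)\<^sup>*\<^sup>* P Q" "1 \<le> Q v"
      using solv unfolding solvable_def reachable_def by blast
    then have "1 \<le> P v \<or> (\<exists>w\<in>T. E w v)"
      unfolding T_def by (rule reachable_imp_pebble_or_two_pebble_neighbour)
    with v show "v \<in> T \<union> S \<union> U"
      unfolding S_def U_def by blast
  qed
  have "real (card V) \<le> real (card T) + real (card S) + real (card U)"
    using card_mono[OF _ cover] card_Un_le[of T S] card_Un_le[of "T \<union> S" U] finV TV
    unfolding S_def U_def by (simp add: finite_subset)
  moreover have "real (card T) + real (card S) \<le> 13/2 * (\<Sum>a\<in>T. real (P a))"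
    unfolding T_def S_def by (rule card_two_pebble_set_and_boundary_le[OF assms(1-8)])
  moreover have "real (card U) \<le> (\<Sum>x\<in>V - T. real (P x))"
    using sum_mono[of U "\<lambda>_. 1" "\<lambda>x. real (P x)"] sum_mono2[of "V - T" U "\<lambda>x. real (P x)"] finV
    unfolding U_def by fastforce
  moreover have "(\<Sum>x\<in>V. real (P x)) = (\<Sum>x\<in>V - T. real (P x)) + (\<Sum>x\<in>T. real (P x))"
    using sum.subset_diff[OF TV finV] .
  moreover have "0 \<le> (\<Sum>x\<in>V - T. real (P x))"
    by (simp add: sum_nonneg)
  ultimately show ?thesis
    by (simp add: of_nat_sum)
qed

section \<open>The torus\<close>

text \<open>(i + m - a) mod m is the position of i counted from a along the cycle; adding m first
  avoids truncated subtraction when a < m.\<close>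
definition cycle_dist :: "nat \<Rightarrow> nat \<Rightarrow> nat \<Rightarrow> nat" where
  "cycle_dist m a i = min ((i + m - a) mod m) (m - (i + m - a) mod m)"

definition torus_dist :: "nat \<Rightarrow> nat \<Rightarrow> nat \<times> nat \<Rightarrow> nat \<times> nat \<Rightarrow> nat" where
  "torus_dist m n u x = cycle_dist m (fst u) (fst x) + cycle_dist n (snd u) (snd x)"

lemma cycle_dist_self: "cycle_dist m a a = 0"
  unfolding cycle_dist_def by simp

lemma min_cyclic_Suc_mod_le:
  assumes "k < m" "k' < m" "k' = Suc k mod m \<or> k = Suc k' mod m"
  shows "min k' (m - k') \<le> min k (m - k) + 1"
  using assms by (auto simp: mod_Suc split: if_splits)

lemma shift_Suc_mod:
  assumes "a < m"
  shows "(Suc x mod m + m - a) mod m = Suc ((x + m - a) mod m) mod m"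
proof -
  have "(Suc x mod m + m - a) mod m = (Suc x mod m + (m - a)) mod m"
    using assms by simp
  also have "\<dots> = Suc (x + (m - a)) mod m"
    by (simp add: mod_add_left_eq)
  also have "\<dots> = Suc ((x + (m - a)) mod m) mod m"
    by (simp add: mod_Suc_eq)
  finally show ?thesis
    using assms by simp
qed

lemma cycle_dist_adj_le:
  assumes "a < m" and "cycle_adj m i j"
  shows "cycle_dist m a j \<le> cycle_dist m a i + 1"
proof -
  have "j = Suc i mod m \<or> i = Suc j mod m"
    using assms(2) unfolding cycle_adj_def by auto
  then have "(j + m - a) mod m = Suc ((i + m - a) mod m) mod m
      \<or> (i + m - a) mod m = Suc ((j + m - a) mod m) mod m"
    using shift_Suc_mod[OF assms(1)] by blast
  then show ?thesis
    unfolding cycle_dist_def using assms(1) by (intro min_cyclic_Suc_mod_le) auto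
qed

lemma sum_pow_min_le_3: "(\<Sum>k<m. (1/2::real) ^ min k (m - k)) \<le> 3"
proof -
  have geom: "(\<Sum>k<m. (1/2::real) ^ k) \<le> 2"
    by (simp add: sum_gp_strict)
  have "(\<Sum>k<m. (1/2::real) ^ (m - k)) = (\<Sum>k<m. (1/2) ^ Suc k)"
    by (rule sum.reindex_bij_witness[where i = "\<lambda>k. m - Suc k" and j = "\<lambda>k. m - Suc k"])
      (auto simp: Suc_diff_Suc)
  also have "\<dots> = 1/2 * (\<Sum>k<m. (1/2) ^ k)"
    by (simp add: sum_distrib_left)
  finally have "(\<Sum>k<m. (1/2::real) ^ (m - k)) \<le> 1"
    using geom by simp
  moreover have "(\<Sum>k<m. (1/2::real) ^ min k (m - k))
      \<le> (\<Sum>k<m. (1/2::real) ^ k) + (\<Sum>k<m. (1/2) ^ (m - k))"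
    unfolding sum.distrib[symmetric] by (intro sum_mono) (auto simp: min_def)
  ultimately show ?thesis
    using geom by linarith
qed

lemma shift_mod_cancel:
  fixes a b m :: nat
  assumes "a < m" and "b < m"
  shows "((b + a) mod m + m - a) mod m = b"
proof -
  have "((b + a) mod m + m - a) mod m = ((b + a) mod m + (m - a)) mod m"
    using assms(1) by simp
  also have "\<dots> = (b + a + (m - a)) mod m"
    by (simp add: mod_add_left_eq)
  also have "b + a + (m - a) = b + m"
    using assms(1) by simp
  finally show ?thesis
    using assms(2) by simp
qed

lemma sum_pow_cycle_dist_le_3:
  assumes "a < m"
  shows "(\<Sum>i<m. (1/2::real) ^ cycle_dist m a i) \<le> 3"
proof -
  have "(\<Sum>i<m. (1/2::real) ^ cycle_dist m a i) = (\<Sum>k<m. (1/2) ^ min k (m - k))"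
    unfolding cycle_dist_def
    by (rule sum.reindex_bij_witness[where i = "\<lambda>k. (k + a) mod m" and j = "\<lambda>i. (i + m - a) mod m"])
      (use assms in \<open>auto simp: shift_mod_cancel mod_add_left_eq\<close>)
  also have "\<dots> \<le> 3"
    by (rule sum_pow_min_le_3)
  finally show ?thesis .
qed

lemma torus_dist_self: "torus_dist m n u u = 0"
  unfolding torus_dist_def by (simp add: cycle_dist_self)

lemma cycle_adj_sym: "cycle_adj m i j \<Longrightarrow> cycle_adj m j i"
  unfolding cycle_adj_def by auto

lemma torus_adj_sym: "torus_adj m n a b \<Longrightarrow> torus_adj m n b a"
  unfolding torus_adj_def cart_adj_def using cycle_adj_sym by metis

lemma torus_adj_closed:
  "torus_adj m n a b \<Longrightarrow> a \<in> torus_vertices m n \<Longrightarrow> b \<in> torus_vertices m n"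
  unfolding torus_adj_def cart_adj_def cycle_adj_def torus_vertices_def
  by (cases a; cases b) auto

lemma torus_dist_adj_le:
  assumes "u \<in> torus_vertices m n" and "torus_adj m n y x"
  shows "torus_dist m n u x \<le> torus_dist m n u y + 1"
  using assms cycle_dist_adj_le[of "fst u" m] cycle_dist_adj_le[of "snd u" n]
  unfolding torus_adj_def cart_adj_def torus_dist_def torus_vertices_def
  by (fastforce simp: mem_Times_iff)

lemma sum_pow_torus_dist_le_9:
  assumes "u \<in> torus_vertices m n"
  shows "(\<Sum>x\<in>torus_vertices m n. (1/2::real) ^ torus_dist m n u x) \<le> 9"
proof -
  have u: "fst u < m" "snd u < n"
    using assms unfolding torus_vertices_def by auto
  have "(\<Sum>x\<in>torus_vertices m n. (1/2::real) ^ torus_dist m n u x)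
      = (\<Sum>i<m. (1/2::real) ^ cycle_dist m (fst u) i) * (\<Sum>j<n. (1/2) ^ cycle_dist n (snd u) j)"
    unfolding torus_vertices_def torus_dist_def power_add sum_product sum.cartesian_product
    by (simp add: lessThan_atLeast0 case_prod_beta)
  also have "\<dots> \<le> 3 * 3"
    by (intro mult_mono sum_pow_cycle_dist_le_3 u sum_nonneg) simp_all
  finally show ?thesis
    by simp
qed

lemma cycle_adj_cases:
  assumes "cycle_adj m i j"
  shows "j = Suc i mod m \<or> j = (i + m - 1) mod m"
proof -
  have "j < m" and "j = Suc i mod m \<or> i = Suc j mod m"
    using assms unfolding cycle_adj_def by auto
  moreover have "(Suc j mod m + m - 1) mod m = j" if "j < m" for j
    using that by (cases "Suc j = m") auto
  ultimately show ?thesis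
    by auto
qed

lemma torus_degree_le_4: "finite {x. torus_adj m n y x} \<and> card {x. torus_adj m n y x} \<le> 4"
proof -
  let ?N = "[(Suc (fst y) mod m, snd y), ((fst y + m - 1) mod m, snd y),
     (fst y, Suc (snd y) mod n), (fst y, (snd y + n - 1) mod n)]"
  have sub: "{x. torus_adj m n y x} \<subseteq> set ?N"
  proof
    fix x assume "x \<in> {x. torus_adj m n y x}"
    then have "(cycle_adj m (fst y) (fst x) \<and> snd y = snd x)
        \<or> (cycle_adj n (snd y) (snd x) \<and> fst y = fst x)"
      unfolding torus_adj_def cart_adj_def by simp
    then show "x \<in> set ?N"
      using cycle_adj_cases[of m "fst y" "fst x"] cycle_adj_cases[of n "snd y" "snd x"]
      by (cases x) auto
  qed
  have "card (set ?N) \<le> 4"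
    using card_length[of ?N] by simp
  then show ?thesis
    using card_mono[OF _ sub] finite_subset[OF sub] by auto
qed

lemma pi_opt_attained:
  obtains P where "is_distribution V P" "solvable V E P" "pi_opt V E = sum P V"
proof -
  let ?D = "{sum P V | P. is_distribution V P \<and> solvable V E P}"
  let ?one = "\<lambda>x. if x \<in> V then 1 else 0 :: nat"
  have "is_distribution V ?one"
    unfolding is_distribution_def by simp
  moreover have "solvable V E ?one"
    unfolding solvable_def reachable_def by auto
  ultimately have "Inf ?D \<in> ?D"
    by (intro Inf_nat_def1) blast
  then show thesis
    using that unfolding pi_opt_def by blast
qed

text \<open>The bound holds for all m and n.\<close>
theorem theorem5p6:
  fixes m n :: nat
  assumes "5 \<le> m" and "5 \<le> n"
  shows "real (pi_opt (torus_vertices m n) (torus_adj m n)) \<ge> 2 / 13 * real n * real m"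
proof -
  obtain P where P: "is_distribution (torus_vertices m n) P"
      "solvable (torus_vertices m n) (torus_adj m n) P"
    and opt: "pi_opt (torus_vertices m n) (torus_adj m n) = sum P (torus_vertices m n)"
    by (rule pi_opt_attained)
  have "real (card (torus_vertices m n)) \<le> 13/2 * real (sum P (torus_vertices m n))"
    by (rule card_le_solvable_sum[OF _ torus_adj_closed torus_adj_sym torus_degree_le_4
          torus_dist_self torus_dist_adj_le sum_pow_torus_dist_le_9 P])
      (simp add: torus_vertices_def)
  moreover have "card (torus_vertices m n) = m * n"
    unfolding torus_vertices_def by simp
  ultimately have "real (m * n) \<le> 13/2 * real (pi_opt (torus_vertices m n) (torus_adj m n))"
    unfolding opt by simp
  then show ?thesis
    by (simp add: field_simps)
qed

end
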